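(* Let $P$ be a finite poset and let $\varphi: P\to P$ be a map such that $\varphi\circ\varphi=\mathrm{id}_P$ and, for all $x,y\in P$, $x\le y \iff \varphi(x)\le\varphi(y)$. (i) If $\varphi$ has no fixed points, then $P$ is a $\forall$-game. (ii) If the set of fixed points of $\varphi$ is nonempty and has a minimum element (a fixed point $z$ with $z\le w$ for every fixed point $w$), then $P$ is an $\exists$-game.
   Context: A finite poset $P$ defines a poset game: two players alternate moves; a move consists of choosing a point $x$ of the current poset $Q$ and replacing $Q$ by $Q_x:=\{y\in Q: x\not\le y\}$ (i.e., removing $x$ and every point above it); the first player unable to move (because the poset is empty) loses. $P$ is an $\exists$-game if the player who moves first has a winning strategy, and a $\forall$-game otherwise (i.e., the second player has a winning strategy). *)

theory Defs
  imports Main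
begin

definition move :: "('a \<Rightarrow> 'a \<Rightarrow> bool) \<Rightarrow> 'a set \<Rightarrow> 'a \<Rightarrow> 'a set" where
  "move le Q x = {y \<in> Q. \<not> le x y}"

inductive win :: "('a \<Rightarrow> 'a \<Rightarrow> bool) \<Rightarrow> 'a set \<Rightarrow> bool"
  and lose :: "('a \<Rightarrow> 'a \<Rightarrow> bool) \<Rightarrow> 'a set \<Rightarrow> bool"
  for le :: "'a \<Rightarrow> 'a \<Rightarrow> bool" where
  winI: "x \<in> Q \<Longrightarrow> lose le (move le Q x) \<Longrightarrow> win le Q"
| loseI: "(\<forall>x\<in>Q. win le (move le Q x)) \<Longrightarrow> lose le Q"

definition exists_game :: "'a set \<Rightarrow> ('a \<Rightarrow> 'a \<Rightarrow> bool) \<Rightarrow> bool" where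
  "exists_game P le = win le P"

definition forall_game :: "'a set \<Rightarrow> ('a \<Rightarrow> 'a \<Rightarrow> bool) \<Rightarrow> bool" where
  "forall_game P le = lose le P"

definition finite_poset :: "'a set \<Rightarrow> ('a \<Rightarrow> 'a \<Rightarrow> bool) \<Rightarrow> bool" where
  "finite_poset P le \<longleftrightarrow> finite P
     \<and> (\<forall>x\<in>P. le x x)
     \<and> (\<forall>x\<in>P. \<forall>y\<in>P. le x y \<and> le y x \<longrightarrow> x = y)
     \<and> (\<forall>x\<in>P. \<forall>y\<in>P. \<forall>z\<in>P. le x y \<and> le y z \<longrightarrow> le x z)"

end

theory Submission
  imports Defs
begin

text \<open>Mirror strategy. If the current position is closed under \<phi> and contains no fixed point of \<phi>,
  the second player answers every move x by \<phi> x; the resulting position is again \<phi>-closed and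
  fixed-point free, so the second player wins. If the fixed points have a least element z, the first
  player opens with z, which removes all fixed points while keeping the position \<phi>-closed, and then
  plays the mirror strategy as second player.\<close>

locale poset_involution =
  fixes P :: "'a set" and le :: "'a \<Rightarrow> 'a \<Rightarrow> bool" and \<phi> :: "'a \<Rightarrow> 'a"
  assumes poset: "finite_poset P le"
    and maps_to: "\<phi> ` P \<subseteq> P"
    and involution: "\<forall>x\<in>P. \<phi> (\<phi> x) = x"
    and order_iso: "\<forall>x\<in>P. \<forall>y\<in>P. le x y \<longleftrightarrow> le (\<phi> x) (\<phi> y)"
begin

lemma le_mirror_iff: "x \<in> P \<Longrightarrow> y \<in> P \<Longrightarrow> le x (\<phi> y) \<longleftrightarrow> le (\<phi> x) y"
  using order_iso involution maps_to by (metis image_subset_iff)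

lemma not_le_mirror:
  assumes "x \<in> P" and "\<phi> x \<noteq> x"
  shows "\<not> le x (\<phi> x)"
proof
  assume le: "le x (\<phi> x)"
  have "\<phi> x \<in> P" using assms(1) maps_to by blast
  with le have "le (\<phi> x) x"
    using order_iso[rule_format, OF assms(1) \<open>\<phi> x \<in> P\<close>] involution assms(1) by simp
  moreover have "\<forall>x\<in>P. \<forall>y\<in>P. le x y \<and> le y x \<longrightarrow> x = y"
    using poset unfolding finite_poset_def by blast
  ultimately show False
    using le assms \<open>\<phi> x \<in> P\<close> by blast
qed

lemma move_move_mirror_closed:
  assumes "Q \<subseteq> P" and "\<phi> ` Q \<subseteq> Q" and "x \<in> P"
  shows "\<phi> ` move le (move le Q x) (\<phi> x) \<subseteq> move le (move le Q x) (\<phi> x)"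
proof
  fix y assume "y \<in> \<phi> ` move le (move le Q x) (\<phi> x)"
  then obtain u where u: "u \<in> Q" "\<not> le x u" "\<not> le (\<phi> x) u" and y: "y = \<phi> u"
    unfolding move_def by auto
  have "u \<in> P" using u(1) assms(1) by blast
  then have "\<not> le x (\<phi> u)" and "\<not> le (\<phi> x) (\<phi> u)"
    using u(2,3) le_mirror_iff[OF assms(3) \<open>u \<in> P\<close>]
      order_iso[rule_format, OF assms(3) \<open>u \<in> P\<close>] by simp_all
  then show "y \<in> move le (move le Q x) (\<phi> x)"
    using u(1) y assms(2) unfolding move_def by auto
qed

lemma lose_if_mirror_closed_fixpoint_free:
  "Q \<subseteq> P \<Longrightarrow> \<phi> ` Q \<subseteq> Q \<Longrightarrow> \<forall>y\<in>Q. \<phi> y \<noteq> y \<Longrightarrow> lose le Q"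
proof (induction "card Q" arbitrary: Q rule: less_induct)
  case less
  show ?case
  proof (rule loseI, intro ballI)
    fix x assume x: "x \<in> Q"
    define R where "R = move le (move le Q x) (\<phi> x)"
    have "x \<in> P" and "\<phi> x \<in> Q" and "\<phi> x \<noteq> x" using x less.prems by auto
    then have reply: "\<phi> x \<in> move le Q x"
      using not_le_mirror unfolding move_def by blast
    have "R \<subseteq> Q" unfolding R_def move_def by auto
    moreover have "le x x" using poset \<open>x \<in> P\<close> unfolding finite_poset_def by blast
    then have "x \<notin> R" unfolding R_def move_def by auto
    ultimately have "R \<subset> Q" using x by blast
    moreover have "finite Q"
      using less.prems(1) poset finite_subset unfolding finite_poset_def by blast
    ultimately have "card R < card Q" by (simp add: psubset_card_mono)
    moreover have "\<phi> ` R \<subseteq> R"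
      unfolding R_def using move_move_mirror_closed less.prems(1,2) \<open>x \<in> P\<close> by blast
    moreover have "R \<subseteq> P" and "\<forall>y\<in>R. \<phi> y \<noteq> y"
      using \<open>R \<subset> Q\<close> less.prems(1,3) by auto
    ultimately have "lose le R" using less.hyps by blast
    then show "win le (move le Q x)"
      using winI[OF reply] unfolding R_def by blast
  qed
qed

lemma forall_game_if_fixpoint_free: "\<forall>x\<in>P. \<phi> x \<noteq> x \<Longrightarrow> forall_game P le"
  unfolding forall_game_def
  using lose_if_mirror_closed_fixpoint_free maps_to by blast

lemma exists_game_if_least_fixpoint:
  assumes z: "z \<in> P" "\<phi> z = z" and least: "\<forall>w\<in>P. \<phi> w = w \<longrightarrow> le z w"
  shows "exists_game P le"
proof -
  have twice: "move le (move le P z) (\<phi> z) = move le P z"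
    using z(2) unfolding move_def by auto
  have "\<phi> ` move le P z \<subseteq> move le P z"
    using move_move_mirror_closed[OF order_refl maps_to z(1)] unfolding twice .
  moreover have "\<forall>y\<in>move le P z. \<phi> y \<noteq> y"
    using least unfolding move_def by auto
  moreover have "move le P z \<subseteq> P" unfolding move_def by auto
  ultimately have "lose le (move le P z)"
    using lose_if_mirror_closed_fixpoint_free by blast
  then show ?thesis
    unfolding exists_game_def using winI[OF z(1)] by blast
qed

end

theorem mainTheorem1:
  fixes P :: "'a set" and le :: "'a \<Rightarrow> 'a \<Rightarrow> bool" and \<phi> :: "'a \<Rightarrow> 'a"
  assumes "finite_poset P le"
    and "\<phi> ` P \<subseteq> P"
    and "\<forall>x\<in>P. \<phi> (\<phi> x) = x"
    and "\<forall>x\<in>P. \<forall>y\<in>P. le x y \<longleftrightarrow> le (\<phi> x) (\<phi> y)"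
  shows "((\<forall>x\<in>P. \<phi> x \<noteq> x) \<longrightarrow> forall_game P le)
       \<and> ((\<exists>z\<in>P. \<phi> z = z \<and> (\<forall>w\<in>P. \<phi> w = w \<longrightarrow> le z w)) \<longrightarrow> exists_game P le)"
proof -
  interpret poset_involution P le \<phi>
    by (rule poset_involution.intro) (fact assms)+
  show ?thesis
    using forall_game_if_fixpoint_free exists_game_if_least_fixpoint by blast
qed

end
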